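(* Let $\mathcal C=\mathcal C(I,A,(\rho_i)_{i\in I},(C^a)_{a\in A})$ be a connected Cartan scheme and $\mathcal R=\mathcal R(\mathcal C,(R^a)_{a\in A})$ a root system of type $\mathcal C$. Let $a\in A$ and $i,j\in I$ with $i\neq j$. If $c^a_{ij}=0$, then $c^a_{jl}=c^{\rho_i(a)}_{jl}$ for all $l\in I$.
   Context: Let $I$ be a nonempty finite set and $\{\alpha_i\mid i\in I\}$ the standard basis of $\mathbb Z^I$; $\mathbb N_0=\{0,1,2,\dots\}$. A generalized Cartan matrix is $C=(c_{ij})_{i,j\in I}\in\mathbb Z^{I\times I}$ with $c_{ii}=2$, $c_{jk}\le0$ for $j\ne k$, and $c_{ij}=0\Rightarrow c_{ji}=0$. A Cartan scheme $\mathcal C=\mathcal C(I,A,(\rho_i)_{i\in I},(C^a)_{a\in A})$ consists of a nonempty set $A$, maps $\rho_i:A\to A$ and generalized Cartan matrices $C^a=(c^a_{jk})_{j,k\in I}$ such that (C1) $\rho_i^2=\mathrm{id}$ and (C2) $c^a_{ij}=c^{\rho_i(a)}_{ij}$ for all $a\in A$, $i,j\in I$. It is connected if the group generated by the $\rho_i$ acts transitively on $A$. For $i\in I$, $a\in A$ let $\sigma_i^a\in\mathrm{Aut}(\mathbb Z^I)$, $\sigma_i^a(\alpha_j)=\alpha_j-c^a_{ij}\alpha_i$. A root system of type $\mathcal C$ is a family $\mathcal R=\mathcal R(\mathcal C,(R^a)_{a\in A})$ of subsets $R^a\subset\mathbb Z^I$ such that, writing $R^a_+=R^a\cap\mathbb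 N_0^I$ and $m^a_{i,j}=|R^a\cap(\mathbb N_0\alpha_i+\mathbb N_0\alpha_j)|$, for all $a\in A$, $i,j\in I$: (R1) $R^a=R^a_+\cup(-R^a_+)$; (R2) $R^a\cap\mathbb Z\alpha_i=\{\alpha_i,-\alpha_i\}$; (R3) $\sigma_i^a(R^a)=R^{\rho_i(a)}$; (R4) if $i\neq j$ and $m^a_{i,j}$ is finite then $(\rho_i\rho_j)^{m^a_{i,j}}(a)=a$. *)

theory Defs
  imports Main
begin

text \<open>Index set I is the finite type 'i (nonempty automatically); Z^I is 'i => int;
  the object set A is the type 'a (nonempty automatically).\<close>

definition alpha :: "'i \<Rightarrow> ('i \<Rightarrow> int)" where
  "alpha i = (\<lambda>k. if k = i then 1 else 0)"

definition gen_cartan_matrix :: "('i::finite \<Rightarrow> 'i \<Rightarrow> int) \<Rightarrow> bool" where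
  "gen_cartan_matrix M \<longleftrightarrow>
     (\<forall>i. M i i = 2) \<and> (\<forall>j k. j \<noteq> k \<longrightarrow> M j k \<le> 0) \<and> (\<forall>i j. M i j = 0 \<longrightarrow> M j i = 0)"

definition cartan_scheme :: "('i::finite \<Rightarrow> 'a \<Rightarrow> 'a) \<Rightarrow> ('a \<Rightarrow> 'i \<Rightarrow> 'i \<Rightarrow> int) \<Rightarrow> bool" where
  "cartan_scheme rho C \<longleftrightarrow>
     (\<forall>a. gen_cartan_matrix (C a)) \<and>
     (\<forall>i a. rho i (rho i a) = a) \<and>
     (\<forall>a i j. C a i j = C (rho i a) i j)"

text \<open>Connected: the group generated by the rho_i acts transitively; since the rho_i are
  involutions, the group elements are exactly the finite products (words) of the rho_i.\<close>
definition connected_cs :: "('i::finite \<Rightarrow> 'a \<Rightarrow> 'a) \<Rightarrow> bool" where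
  "connected_cs rho \<longleftrightarrow> (\<forall>a b. \<exists>w :: 'i list. foldr rho w a = b)"

text \<open>sigma_i^a(v) = v - (sum_j c^a_ij v_j) alpha_i, the linear map with
  sigma_i^a(alpha_j) = alpha_j - c^a_ij alpha_i.\<close>
definition sigma :: "('a \<Rightarrow> 'i \<Rightarrow> 'i \<Rightarrow> int) \<Rightarrow> 'i::finite \<Rightarrow> 'a \<Rightarrow> ('i \<Rightarrow> int) \<Rightarrow> ('i \<Rightarrow> int)" where
  "sigma C i a v = (\<lambda>k. v k - (\<Sum>j\<in>UNIV. C a i j * v j) * alpha i k)"

definition pos_roots :: "('a \<Rightarrow> ('i \<Rightarrow> int) set) \<Rightarrow> 'a \<Rightarrow> ('i \<Rightarrow> int) set" where
  "pos_roots R a = R a \<inter> {v. \<forall>k. 0 \<le> v k}"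

definition rank2_roots :: "('a \<Rightarrow> ('i \<Rightarrow> int) set) \<Rightarrow> 'a \<Rightarrow> 'i \<Rightarrow> 'i \<Rightarrow> ('i \<Rightarrow> int) set" where
  "rank2_roots R a i j =
     R a \<inter> {v. \<exists>m n :: nat. v = (\<lambda>k. int m * alpha i k + int n * alpha j k)}"

definition root_system ::
  "('i::finite \<Rightarrow> 'a \<Rightarrow> 'a) \<Rightarrow> ('a \<Rightarrow> 'i \<Rightarrow> 'i \<Rightarrow> int) \<Rightarrow> ('a \<Rightarrow> ('i \<Rightarrow> int) set) \<Rightarrow> bool" where
  "root_system rho C R \<longleftrightarrow>
     cartan_scheme rho C \<and>
     (\<forall>a. R a = pos_roots R a \<union> uminus ` pos_roots R a) \<and>
     (\<forall>a i. R a \<inter> {v. \<exists>z::int. v = (\<lambda>k. z * alpha i k)} = {alpha i, - alpha i}) \<and>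
     (\<forall>a i. sigma C i a ` R a = R (rho i a)) \<and>
     (\<forall>a i j. i \<noteq> j \<and> finite (rank2_roots R a i j) \<longrightarrow>
        ((rho i \<circ> rho j) ^^ card (rank2_roots R a i j)) a = a)"

end

theory Submission
  imports Defs
begin

text \<open>Put \<open>b = \<rho>\<^sub>i(a)\<close>. Reflecting \<open>\<alpha>\<^sub>l\<close> at \<open>\<rho>\<^sub>j(b)\<close> and then at \<open>b\<close> gives the root
  \<open>\<alpha>\<^sub>l - c\<^sup>b\<^sub>j\<^sub>l \<alpha>\<^sub>j - c\<^sup>a\<^sub>i\<^sub>l \<alpha>\<^sub>i\<close> of \<open>R\<^sup>a\<close>, because \<open>c\<^sup>b\<^sub>i\<^sub>j = 0\<close> keeps its \<open>\<alpha>\<^sub>j\<close>-coefficient. Reflecting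
  once more at \<open>a\<close> yields a root whose \<open>\<alpha>\<^sub>l\<close>-coefficient is \<open>1\<close> and whose \<open>\<alpha>\<^sub>j\<close>-coefficient is
  \<open>c\<^sup>b\<^sub>j\<^sub>l - c\<^sup>a\<^sub>j\<^sub>l\<close>; being positive, this root forces \<open>c\<^sup>a\<^sub>j\<^sub>l \<le> c\<^sup>b\<^sub>j\<^sub>l\<close>. The hypotheses are
  symmetric under \<open>a \<leftrightarrow> b\<close>, which gives equality.\<close>

lemma sum_mult_alpha:
  fixes f :: "'i::finite \<Rightarrow> int"
  shows "(\<Sum>m\<in>UNIV. f m * alpha p m) = f p"
proof -
  have "(\<Sum>m\<in>UNIV. f m * alpha p m) = (\<Sum>m\<in>UNIV. if m = p then f m else 0)"
    by (rule sum.cong) (auto simp: alpha_def)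
  also have "\<dots> = f p" by simp
  finally show ?thesis .
qed

lemma sum_mult_alpha3:
  fixes f :: "'i::finite \<Rightarrow> int"
  shows "(\<Sum>m\<in>UNIV. f m * (x * alpha p m + y * alpha q m + z * alpha r m))
       = x * f p + y * f q + z * f r"
proof -
  have "(\<Sum>m\<in>UNIV. f m * (x * alpha p m + y * alpha q m + z * alpha r m))
      = x * (\<Sum>m\<in>UNIV. f m * alpha p m) + y * (\<Sum>m\<in>UNIV. f m * alpha q m)
        + z * (\<Sum>m\<in>UNIV. f m * alpha r m)"
    by (simp add: algebra_simps sum.distrib sum_distrib_left)
  then show ?thesis by (simp add: sum_mult_alpha)
qed

lemma sigma_alpha:
  "sigma C k x (alpha l) = (\<lambda>n. 1 * alpha l n + (- C x k l) * alpha k n)"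
  by (simp add: sigma_def sum_mult_alpha[of "C x k"])

lemma sigma_alpha3:
  "sigma C k x (\<lambda>n. u * alpha p n + v * alpha q n + w * alpha r n)
     = (\<lambda>n. u * alpha p n + v * alpha q n + w * alpha r n
            - (u * C x k p + v * C x k q + w * C x k r) * alpha k n)"
  by (simp add: sigma_def sum_mult_alpha3)

context
  fixes rho :: "'i::finite \<Rightarrow> 'a \<Rightarrow> 'a" and C :: "'a \<Rightarrow> 'i \<Rightarrow> 'i \<Rightarrow> int"
begin

lemma cartan_scheme_rho_rho: "cartan_scheme rho C \<Longrightarrow> rho k (rho k x) = x"
  by (simp add: cartan_scheme_def)

lemma cartan_scheme_C_rho: "cartan_scheme rho C \<Longrightarrow> C (rho k x) k m = C x k m"
  by (simp add: cartan_scheme_def)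

lemma cartan_scheme_C_diag: "cartan_scheme rho C \<Longrightarrow> C x k k = 2"
  by (simp add: cartan_scheme_def gen_cartan_matrix_def)

lemma cartan_scheme_C_zero_sym: "cartan_scheme rho C \<Longrightarrow> C x p q = 0 \<Longrightarrow> C x q p = 0"
  by (simp add: cartan_scheme_def gen_cartan_matrix_def)

context
  fixes R :: "'a \<Rightarrow> ('i \<Rightarrow> int) set"
  assumes rs: "root_system rho C R"
begin

lemma root_system_cartan_scheme: "cartan_scheme rho C"
  using rs by (simp add: root_system_def)

lemma alpha_in_roots: "alpha k \<in> R x"
proof -
  have "R x \<inter> {v. \<exists>z::int. v = (\<lambda>m. z * alpha k m)} = {alpha k, - alpha k}"
    using rs unfolding root_system_def by (elim conjE) (rule spec2)
  then show ?thesis by blast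
qed

lemma sigma_in_roots: "v \<in> R x \<Longrightarrow> sigma C k x v \<in> R (rho k x)"
proof -
  assume "v \<in> R x"
  moreover have "sigma C k x ` R x = R (rho k x)"
    using rs unfolding root_system_def by (elim conjE) (rule spec2)
  ultimately show ?thesis by blast
qed

lemma root_nonneg_if_pos_coord:
  assumes "v \<in> R x" and "0 < v k"
  shows "0 \<le> v m"
proof -
  have "R x = pos_roots R x \<union> uminus ` pos_roots R x"
    using rs unfolding root_system_def by (elim conjE) (rule spec)
  then have "v \<in> pos_roots R x \<union> uminus ` pos_roots R x"
    using assms(1) by simp
  then show ?thesis
    using assms(2) by (auto simp: pos_roots_def) (metis neg_0_less_iff_less not_less)
qed

lemma reflected_alpha_in_roots:
  assumes "i \<noteq> j" and "C a i j = 0"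
  shows "(\<lambda>n. 1 * alpha l n + (- C (rho i a) j l) * alpha j n + (- C a i l) * alpha i n) \<in> R a"
proof -
  note cs = root_system_cartan_scheme
  define b where "b = rho i a"
  have "sigma C j (rho j b) (alpha l) \<in> R b"
    using sigma_in_roots[OF alpha_in_roots] cartan_scheme_rho_rho[OF cs] by metis
  moreover have "sigma C j (rho j b) (alpha l)
      = (\<lambda>n. 1 * alpha l n + (- C b j l) * alpha j n + 0 * alpha i n)"
    by (simp add: sigma_alpha cartan_scheme_C_rho[OF cs])
  ultimately have "sigma C i b (\<lambda>n. 1 * alpha l n + (- C b j l) * alpha j n + 0 * alpha i n)
      \<in> R a"
    using sigma_in_roots cartan_scheme_rho_rho[OF cs] b_def by metis
  moreover have "C b i j = 0" "C b i l = C a i l"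
    using assms(2) cartan_scheme_C_rho[OF cs] b_def by simp_all
  ultimately show ?thesis
    unfolding sigma_alpha3 by (simp add: algebra_simps b_def)
qed

lemma cartan_entry_le_rho:
  assumes ij: "i \<noteq> j" and "C a i j = 0" and li: "l \<noteq> i" and lj: "l \<noteq> j"
  shows "C a j l \<le> C (rho i a) j l"
proof -
  note cs = root_system_cartan_scheme
  define w where "w = sigma C j a
    (\<lambda>n. 1 * alpha l n + (- C (rho i a) j l) * alpha j n + (- C a i l) * alpha i n)"
  have "w \<in> R (rho j a)"
    using sigma_in_roots[OF reflected_alpha_in_roots[OF assms(1,2)]] w_def by simp
  moreover have "C a j i = 0" "C a j j = 2"
    using cartan_scheme_C_zero_sym[OF cs assms(2)] cartan_scheme_C_diag[OF cs] by simp_all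
  then have "w l = 1" "w j = C (rho i a) j l - C a j l"
    using ij li lj unfolding w_def sigma_alpha3 by (simp_all add: alpha_def)
  ultimately show ?thesis
    using root_nonneg_if_pos_coord[of w "rho j a" l j] by simp
qed

lemma cartan_entry_eq_rho:
  assumes "i \<noteq> j" and "C a i j = 0"
  shows "C a j l = C (rho i a) j l"
proof -
  note cs = root_system_cartan_scheme
  have ca: "C (rho i a) i j = 0" "C a j i = 0" "C (rho i a) j i = 0"
    using assms(2) cartan_scheme_C_rho[OF cs] cartan_scheme_C_zero_sym[OF cs] by simp_all
  consider "l = j" | "l = i" | "l \<noteq> i" "l \<noteq> j" by blast
  then show ?thesis
  proof cases
    case 3
    then show ?thesis
      using cartan_entry_le_rho[OF assms] cartan_entry_le_rho[OF assms(1) ca(1)]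
        cartan_scheme_rho_rho[OF cs] by fastforce
  qed (simp_all add: cartan_scheme_C_diag[OF cs] ca)
qed

end

end

theorem lemma4p5:
  fixes rho :: "'i::finite \<Rightarrow> 'a \<Rightarrow> 'a"
    and C :: "'a \<Rightarrow> 'i \<Rightarrow> 'i \<Rightarrow> int"
    and R :: "'a \<Rightarrow> ('i \<Rightarrow> int) set"
  assumes "cartan_scheme rho C"
    and "connected_cs rho"
    and "root_system rho C R"
    and "i \<noteq> j"
    and "C a i j = 0"
  shows "\<forall>l. C a j l = C (rho i a) j l"
  using cartan_entry_eq_rho[OF assms(3-5)] by blast

end
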